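(* Let $(L,\vee,\wedge,0,1)$ be a finite complemented lattice with $0\ne1$ such that the mapping $x\mapsto x^{++}$ from $L$ to $2^L$ is injective, and let $a\in L$ with $a^{++}\neq\{a\}$. Then there exists some $b\in a^{++}$ with $b^{++}=\{b\}$.
   Context: For $a\in L$, $a^+:=\{x\in L\mid a\vee x=1,\ a\wedge x=0\}$ (the set of all complements of $a$). For $A\subseteq L$, $A^+:=\{x\in L\mid a\vee x=1\text{ and }a\wedge x=0\text{ for all }a\in A\}$, and $a^{++}:=(a^+)^+$. *)

theory Defs
  imports Main
begin

definition compls :: "'a::bounded_lattice \<Rightarrow> 'a set" where
  "compls a = {x. sup a x = top \<and> inf a x = bot}"

definition compls_set :: "'a::bounded_lattice set \<Rightarrow> 'a set" where
  "compls_set A = {x. \<forall>a\<in>A. sup a x = top \<and> inf a x = bot}"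

definition dcompls :: "'a::bounded_lattice \<Rightarrow> 'a set" where
  "dcompls a = compls_set (compls a)"

end

theory Submission
  imports Defs
begin

text \<open>Since \<open>b \<in> a\<^sup>+\<^sup>+\<close> means \<open>a\<^sup>+ \<subseteq> b\<^sup>+\<close>, the map \<open>x \<mapsto> x\<^sup>+\<^sup>+\<close> is a closure-like
  operator: every \<open>b \<in> a\<^sup>+\<^sup>+\<close> satisfies \<open>b \<in> b\<^sup>+\<^sup>+ \<subseteq> a\<^sup>+\<^sup>+\<close>, and by injectivity the
  inclusion is proper unless \<open>b = a\<close>. In a finite lattice, descending along proper
  inclusions must stop at some \<open>b\<close> with \<open>b\<^sup>+\<^sup>+ = {b}\<close>.\<close>

lemma mem_dcompls_iff: "b \<in> dcompls a \<longleftrightarrow> compls a \<subseteq> compls b"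
  by (auto simp: dcompls_def compls_set_def compls_def sup_commute inf_commute)

lemma dcompls_self: "a \<in> dcompls a"
  by (simp add: mem_dcompls_iff)

lemma dcompls_subset: "b \<in> dcompls a \<Longrightarrow> dcompls b \<subseteq> dcompls a"
  by (auto simp: mem_dcompls_iff)

lemma dcompls_psubset:
  fixes a b :: "'a::bounded_lattice"
  assumes "inj (dcompls :: 'a \<Rightarrow> 'a set)" and "b \<in> dcompls a" and "b \<noteq> a"
  shows "dcompls b \<subset> dcompls a"
proof
  show "dcompls b \<subseteq> dcompls a"
    using assms(2) by (rule dcompls_subset)
  show "dcompls b \<noteq> dcompls a"
    using assms(1,3) by (simp add: inj_eq)
qed

lemma ex_dcompls_singleton:
  fixes a :: "'a::{bounded_lattice, finite}"
  assumes inj: "inj (dcompls :: 'a \<Rightarrow> 'a set)"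
  shows "\<exists>b\<in>dcompls a. dcompls b = {b}"
proof (induction a rule: measure_induct_rule[where f = "\<lambda>a. card (dcompls a)"])
  case (less a)
  show ?case
  proof (cases "dcompls a = {a}")
    case True
    then show ?thesis by blast
  next
    case False
    then obtain c where c: "c \<in> dcompls a" "c \<noteq> a"
      using dcompls_self[of a] by blast
    then have "dcompls c \<subset> dcompls a"
      using inj by (rule dcompls_psubset[rotated])
    then have "card (dcompls c) < card (dcompls a)"
      by (simp add: psubset_card_mono)
    then obtain b where "b \<in> dcompls c" "dcompls b = {b}"
      using less.IH by blast
    then show ?thesis
      using dcompls_subset[OF c(1)] by blast
  qed
qed

theorem proposition2:
  fixes a :: "'a::{bounded_lattice, finite}"
  assumes complemented: "\<forall>x::'a. \<exists>y. sup x y = top \<and> inf x y = bot"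
    and nontrivial: "(bot::'a) \<noteq> top"
    and inj: "inj (dcompls :: 'a \<Rightarrow> 'a set)"
    and a: "dcompls a \<noteq> {a}"
  shows "\<exists>b\<in>dcompls a. dcompls b = {b}"
  using inj by (rule ex_dcompls_singleton)

end
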